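(* Let $n=p$, $X=I_n$, and let $\lambda=\lambda_n>0$ satisfy $\sqrt n/\lambda_n\to\infty$. Then there exists $\delta>0$ such that, as $n\to\infty$, \[ \mathbb E_{\beta^0=0}\,\Pi^{\mathrm{LASSO}}_{\lambda_n}\Big(\beta:\|\beta\|_2\le\delta\sqrt n\Big(\frac1{\lambda_n}\wedge1\Big)\ \Big|\ Y\Big)\to0. \]
   Context: Sequence model: $Y=\beta+\varepsilon$ with $\beta\in\mathbb R^n$ and $\varepsilon\sim N_n(0,I_n)$; $\mathbb E_{\beta^0=0}$ denotes expectation when $Y\sim N_n(0,I_n)$. $\Pi^{\mathrm{LASSO}}_\lambda(\cdot\mid Y)$ is the posterior distribution for the prior under which $\beta_1,\dots,\beta_n$ are i.i.d. with Laplace density $x\mapsto\frac\lambda2e^{-\lambda|x|}$, i.e. $\Pi^{\mathrm{LASSO}}_\lambda(B\mid Y)\propto\int_Be^{-\|Y-\beta\|_2^2/2-\lambda\|\beta\|_1}d\beta$ (whose mode is the LASSO estimator). *)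

theory Defs
  imports "HOL-Probability.Probability"
begin

text \<open>Lebesgue measure on R^n, with vectors represented as functions nat => real
  on the index set {..<n} (extensional functions, product measure).\<close>
abbreviation lebesgue_n :: "nat \<Rightarrow> (nat \<Rightarrow> real) measure" where
  "lebesgue_n n \<equiv> PiM {..<n} (\<lambda>_. lborel)"

abbreviation std_gauss_n :: "nat \<Rightarrow> (nat \<Rightarrow> real) measure" where
  "std_gauss_n n \<equiv> PiM {..<n} (\<lambda>_. density lborel std_normal_density)"

definition lasso_weight :: "nat \<Rightarrow> real \<Rightarrow> (nat \<Rightarrow> real) \<Rightarrow> (nat \<Rightarrow> real) \<Rightarrow> real" where
  "lasso_weight n lam Y b =
     exp (- (\<Sum>i<n. (Y i - b i)^2) / 2 - lam * (\<Sum>i<n. \<bar>b i\<bar>))"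

text \<open>Posterior probability of a set B under the Laplace(lam) prior.\<close>
definition lasso_post :: "nat \<Rightarrow> real \<Rightarrow> (nat \<Rightarrow> real) \<Rightarrow> (nat \<Rightarrow> real) set \<Rightarrow> real" where
  "lasso_post n lam Y B =
     (LINT b:B | lebesgue_n n. lasso_weight n lam Y b) /
     (LINT b | lebesgue_n n. lasso_weight n lam Y b)"

end

theory Submission
  imports Defs
begin

text \<open>The LASSO posterior is a product of one-dimensional posteriors with densities
  proportional to \<open>w(x) = exp (-(y - x)\<^sup>2/2 - \<lambda>|x|)\<close>. Put \<open>m = min (1/\<lambda>) 1\<close>. Shifting
  \<open>x\<close> by \<open>\<plusminus>2m\<close> (towards \<open>y\<close>) changes \<open>log w\<close> by at most 6, so a fixed fraction
  \<open>1/(1 + e\<^sup>6)\<close> of the mass of \<open>w\<close> lies in \<open>|x| \<ge> m\<close>; hence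
  \<open>\<integral> w(x) exp (-|x|/m) \<le> q \<integral> w\<close> for the absolute constant \<open>q = tilt_const < 1\<close>.
  On the ball \<open>\<parallel>\<beta>\<parallel>\<^sub>2 \<le> \<delta>\<surd>n m\<close> we have \<open>\<parallel>\<beta>\<parallel>\<^sub>1 \<le> \<delta> n m\<close>, so an exponential Markov bound gives
  posterior mass at most \<open>(e\<^sup>\<delta> q)\<^sup>n\<close> for every \<open>Y\<close>, which tends to 0 once \<open>e\<^sup>\<delta> q < 1\<close>.\<close>

definition lasso_factor :: "real \<Rightarrow> real \<Rightarrow> real \<Rightarrow> real" where
  "lasso_factor lam y x = exp (- ((y - x)^2) / 2 - lam * \<bar>x\<bar>)"

lemma lasso_factor_pos: "0 < lasso_factor lam y x"
  by (simp add: lasso_factor_def)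

lemma borel_measurable_lasso_factor [measurable]: "lasso_factor lam y \<in> borel_measurable borel"
  unfolding lasso_factor_def by measurable

lemma lasso_weight_eq_prod: "lasso_weight n lam Y b = (\<Prod>i<n. lasso_factor lam (Y i) (b i))"
proof -
  have "- (\<Sum>i<n. (Y i - b i)^2) / 2 - lam * (\<Sum>i<n. \<bar>b i\<bar>)
      = (\<Sum>i<n. - ((Y i - b i)^2) / 2 - lam * \<bar>b i\<bar>)"
    by (simp add: sum_subtractf sum_distrib_left sum_divide_distrib sum_negf)
  then show ?thesis
    unfolding lasso_weight_def lasso_factor_def by (simp add: exp_sum)
qed

lemma integrable_lasso_factor:
  assumes "0 \<le> lam"
  shows "integrable lborel (lasso_factor lam y)"
proof (rule Bochner_Integration.integrable_bound)
  show "integrable lborel (\<lambda>x. sqrt (2*pi) * normal_density y 1 x)" by simp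
  show "AE x in lborel. norm (lasso_factor lam y x) \<le> norm (sqrt (2*pi) * normal_density y 1 x)"
  proof (rule AE_I2)
    fix x
    have "lasso_factor lam y x \<le> exp (- ((x - y)^2) / 2)"
      using assms unfolding lasso_factor_def by (simp add: power2_commute)
    then show "norm (lasso_factor lam y x) \<le> norm (sqrt (2*pi) * normal_density y 1 x)"
      using lasso_factor_pos[of lam y x] by (simp add: normal_density_def)
  qed
qed simp

lemma integrable_lasso_factor_mult:
  assumes "0 \<le> lam" and [measurable]: "g \<in> borel_measurable borel" and "\<And>x. \<bar>g x\<bar> \<le> 1"
  shows "integrable lborel (\<lambda>x. lasso_factor lam y x * g x)"
proof (rule Bochner_Integration.integrable_bound[OF integrable_lasso_factor[OF assms(1)]])
  show "AE x in lborel. norm (lasso_factor lam y x * g x) \<le> norm (lasso_factor lam y x)"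
    using assms(3) lasso_factor_pos[of lam y] by (auto simp: abs_mult intro!: mult_left_le)
qed simp

lemma integral_lasso_factor_pos:
  assumes "0 \<le> lam"
  shows "0 < (\<integral>x. lasso_factor lam y x \<partial>lborel)"
proof -
  have "(\<integral>x. lasso_factor lam y x \<partial>lborel) \<noteq> 0"
  proof
    assume "(\<integral>x. lasso_factor lam y x \<partial>lborel) = 0"
    then have "AE x in lborel. lasso_factor lam y x = 0"
      using integral_nonneg_eq_0_iff_AE[OF integrable_lasso_factor[OF assms]]
      by (simp add: less_imp_le lasso_factor_pos)
    then have "AE (x::real) in lborel. False"
      by (simp add: lasso_factor_pos less_imp_neq[symmetric])
    then have "ae_filter (lborel :: real measure) = bot"
      using trivial_limit_def by blast
    then show False
      by (simp add: ae_filter_eq_bot_iff)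
  qed
  moreover have "0 \<le> (\<integral>x. lasso_factor lam y x \<partial>lborel)"
    by (simp add: less_imp_le lasso_factor_pos)
  ultimately show ?thesis by simp
qed

lemma lasso_factor_shift_ge:
  assumes "0 \<le> lam" "m \<le> 1" "lam * m \<le> 1" "\<bar>x\<bar> < m" "\<bar>t\<bar> = 2 * m" "0 \<le> t * y"
  shows "exp (-6) * lasso_factor lam y x \<le> lasso_factor lam y (x + t)"
proof -
  have "t * x \<le> \<bar>t\<bar> * \<bar>x\<bar>"
    by (metis abs_ge_self abs_mult)
  also have "\<dots> \<le> 2 * m * m"
    using assms(4,5) by (simp add: mult_left_mono)
  finally have "t * x \<le> 2 * m * m" .
  moreover have "m * m \<le> 1"
    using assms(2,4) by (intro mult_le_one) auto
  moreover have "(y - (x + t))^2 = (y - x)^2 - 2 * (t * y) + 2 * (t * x) + t^2"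
    by (simp add: power2_eq_square algebra_simps)
  moreover have "t^2 = 4 * (m * m)"
    using power2_abs[of t] assms(5) by (simp add: power2_eq_square)
  moreover have "lam * \<bar>x + t\<bar> \<le> lam * \<bar>x\<bar> + 2"
  proof -
    have "lam * \<bar>x + t\<bar> \<le> lam * \<bar>x\<bar> + lam * \<bar>t\<bar>"
      using assms(1) by (metis abs_triangle_ineq distrib_left mult_left_mono)
    then show ?thesis using assms(3,5) by simp
  qed
  ultimately have "- ((y - x)^2) / 2 - lam * \<bar>x\<bar> - 6 \<le> - ((y - (x + t))^2) / 2 - lam * \<bar>x + t\<bar>"
    using assms(6) by linarith
  then show ?thesis
    unfolding lasso_factor_def by (simp flip: exp_add)
qed

lemma integral_lasso_factor_inner_le:
  assumes "0 \<le> lam" "m \<le> 1" "lam * m \<le> 1"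
  shows "(\<integral>x. lasso_factor lam y x * indicator {x. \<bar>x\<bar> < m} x \<partial>lborel)
    \<le> exp 6 * (\<integral>x. lasso_factor lam y x * indicator {x. m \<le> \<bar>x\<bar>} x \<partial>lborel)"
proof -
  let ?f = "lasso_factor lam y"
  define I where "I = {x::real. \<bar>x\<bar> < m}"
  define T where "T = {x::real. m \<le> \<bar>x\<bar>}"
  have [measurable]: "I \<in> sets borel" "T \<in> sets borel"
    unfolding I_def T_def by measurable
  define t where "t = (if 0 \<le> y then 2 * m else - 2 * m)"
  define g where "g x = ?f x * indicator I (x - t)" for x
  have int_g: "integrable lborel g"
    unfolding g_def using assms(1) by (intro integrable_lasso_factor_mult) auto
  have "(\<integral>x. ?f x * indicator I x \<partial>lborel) \<le> (\<integral>x. exp 6 * g (t + 1 * x) \<partial>lborel)"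
  proof (rule integral_mono')
    show "integrable lborel (\<lambda>x. exp 6 * g (t + 1 * x))"
      using lborel_integrable_real_affine[OF int_g, of 1 t] by simp
    fix x :: real
    show "0 \<le> exp 6 * g (t + 1 * x)"
      by (simp add: g_def less_imp_le lasso_factor_pos)
    show "?f x * indicator I x \<le> exp 6 * g (t + 1 * x)"
    proof (cases "x \<in> I")
      case True
      then have "0 < m"
        by (auto simp: I_def)
      then have "\<bar>t\<bar> = 2 * m" "0 \<le> t * y"
        by (auto simp: t_def mult_nonneg_nonpos)
      then have "exp (-6) * ?f x \<le> ?f (x + t)"
        using assms True by (intro lasso_factor_shift_ge) (auto simp: I_def)
      then have "?f x \<le> exp 6 * ?f (x + t)"
        by (simp add: exp_minus field_simps)
      then show ?thesis
        using True by (simp add: g_def add.commute)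
    qed (simp add: g_def lasso_factor_pos less_imp_le)
  qed
  also have "\<dots> = exp 6 * (\<integral>x. g x \<partial>lborel)"
    by (simp add: lborel_integral_real_affine[of 1 g t])
  also have "\<dots> \<le> exp 6 * (\<integral>x. ?f x * indicator T x \<partial>lborel)"
  proof (intro mult_left_mono integral_mono')
    show "integrable lborel (\<lambda>x. ?f x * indicator T x)"
      using assms(1) by (intro integrable_lasso_factor_mult) (auto split: split_indicator)
    fix x :: real
    have "x - t \<in> I \<Longrightarrow> x \<in> T"
      by (auto simp: I_def T_def t_def split: if_splits)
    then show "g x \<le> ?f x * indicator T x"
      by (auto simp: g_def lasso_factor_pos less_imp_le split: split_indicator)
  qed (simp_all add: lasso_factor_pos less_imp_le)
  finally show ?thesis
    unfolding I_def T_def .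
qed

lemma integral_lasso_factor_le_tail:
  assumes "0 \<le> lam" "m \<le> 1" "lam * m \<le> 1"
  shows "(\<integral>x. lasso_factor lam y x \<partial>lborel)
    \<le> (1 + exp 6) * (\<integral>x. lasso_factor lam y x * indicator {x. m \<le> \<bar>x\<bar>} x \<partial>lborel)"
proof -
  let ?f = "lasso_factor lam y"
  have "(\<integral>x. ?f x \<partial>lborel)
      = (\<integral>x. ?f x * indicator {x. \<bar>x\<bar> < m} x + ?f x * indicator {x. m \<le> \<bar>x\<bar>} x \<partial>lborel)"
    by (intro Bochner_Integration.integral_cong) (auto split: split_indicator)
  also have "\<dots> = (\<integral>x. ?f x * indicator {x. \<bar>x\<bar> < m} x \<partial>lborel)
      + (\<integral>x. ?f x * indicator {x. m \<le> \<bar>x\<bar>} x \<partial>lborel)"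
    using assms(1) by (intro Bochner_Integration.integral_add integrable_lasso_factor_mult)
      (auto split: split_indicator)
  finally show ?thesis
    using integral_lasso_factor_inner_le[OF assms, of y] by (simp add: algebra_simps)
qed

definition tilt_const :: real where
  "tilt_const = 1 - (1 - exp (-1)) / (1 + exp 6)"

lemma tilt_const_pos: "0 < tilt_const"
proof -
  have "1 - exp (-1::real) < 1 + exp 6"
    by (smt (verit) exp_gt_zero)
  then show ?thesis
    unfolding tilt_const_def by (simp add: add_pos_pos)
qed

lemma tilt_const_less_one: "tilt_const < 1"
  unfolding tilt_const_def by (simp add: add_pos_pos)

lemma integral_lasso_factor_tilt_le:
  assumes "0 \<le> lam" "0 < m" "m \<le> 1" "lam * m \<le> 1"
  shows "(\<integral>x. lasso_factor lam y x * exp (- \<bar>x\<bar> / m) \<partial>lborel)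
    \<le> tilt_const * (\<integral>x. lasso_factor lam y x \<partial>lborel)"
proof -
  let ?f = "lasso_factor lam y"
  define T where "T = {x::real. m \<le> \<bar>x\<bar>}"
  have [measurable]: "T \<in> sets borel"
    unfolding T_def by measurable
  define c where "c = 1 - exp (-1::real)"
  have c: "0 \<le> c" "c \<le> 1"
    by (auto simp: c_def)
  have int_T: "integrable lborel (\<lambda>x. ?f x * indicator T x)"
    using assms(1) by (intro integrable_lasso_factor_mult) (auto split: split_indicator)
  have "(\<integral>x. ?f x * exp (- \<bar>x\<bar> / m) \<partial>lborel) \<le> (\<integral>x. ?f x - c * (?f x * indicator T x) \<partial>lborel)"
  proof (rule integral_mono')
    show "integrable lborel (\<lambda>x. ?f x - c * (?f x * indicator T x))"
      using integrable_lasso_factor[OF assms(1)] int_T by simp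
    fix x :: real
    have "exp (- \<bar>x\<bar> / m) \<le> 1 - c * indicator T x"
    proof (cases "x \<in> T")
      case True
      then have "- \<bar>x\<bar> / m \<le> -1"
        using assms(2) by (simp add: T_def field_simps)
      then show ?thesis
        using True by (simp add: c_def)
    qed (use assms(2) in simp)
    then have "?f x * exp (- \<bar>x\<bar> / m) \<le> ?f x * (1 - c * indicator T x)"
      using lasso_factor_pos[of lam y x] by (intro mult_left_mono) auto
    then show "?f x * exp (- \<bar>x\<bar> / m) \<le> ?f x - c * (?f x * indicator T x)"
      by (simp add: algebra_simps)
    show "0 \<le> ?f x - c * (?f x * indicator T x)"
      using lasso_factor_pos[of lam y x] c by (simp add: indicator_def mult_left_le_one_le)
  qed
  also have "\<dots> = (\<integral>x. ?f x \<partial>lborel) - c * (\<integral>x. ?f x * indicator T x \<partial>lborel)"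
    using integrable_lasso_factor[OF assms(1)] int_T by simp
  also have "\<dots> \<le> (\<integral>x. ?f x \<partial>lborel) - c * ((\<integral>x. ?f x \<partial>lborel) / (1 + exp 6))"
    using integral_lasso_factor_le_tail[OF assms(1,3,4), of y] c
    by (intro diff_left_mono mult_left_mono) (auto simp: T_def field_simps add_pos_pos)
  also have "\<dots> = tilt_const * (\<integral>x. ?f x \<partial>lborel)"
    by (simp add: tilt_const_def c_def algebra_simps)
  finally show ?thesis .
qed

lemma sum_abs_le_sqrt_card_mult_sqrt_sum_squares:
  fixes f :: "'a \<Rightarrow> real"
  shows "(\<Sum>i\<in>A. \<bar>f i\<bar>) \<le> sqrt (card A) * sqrt (\<Sum>i\<in>A. (f i)^2)"
proof -
  have "(\<Sum>i\<in>A. \<bar>f i\<bar>)^2 \<le> (\<Sum>i\<in>A. (f i)^2) * card A"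
    using sum_squared_le_sum_of_squares[of "\<lambda>i. \<bar>f i\<bar>" A] by simp
  then have "sqrt ((\<Sum>i\<in>A. \<bar>f i\<bar>)^2) \<le> sqrt ((\<Sum>i\<in>A. (f i)^2) * card A)"
    by (rule real_sqrt_le_mono)
  then show ?thesis
    by (simp add: real_sqrt_mult sum_nonneg mult.commute)
qed

lemma lasso_post_nonneg: "0 \<le> lasso_post n lam Y B"
  unfolding lasso_post_def set_lebesgue_integral_def
  by (intro divide_nonneg_nonneg Bochner_Integration.integral_nonneg) (simp_all add: lasso_weight_def)

lemma integral_lasso_weight:
  assumes "0 \<le> lam"
  shows "(\<integral>b. lasso_weight n lam Y b \<partial>lebesgue_n n) = (\<Prod>i<n. \<integral>x. lasso_factor lam (Y i) x \<partial>lborel)"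
proof -
  interpret product_sigma_finite "\<lambda>_::nat. lborel :: real measure"
    by (simp add: product_sigma_finite_def lborel.sigma_finite_measure_axioms)
  show ?thesis
    unfolding lasso_weight_eq_prod
    using assms by (subst product_integral_prod) (auto intro: integrable_lasso_factor)
qed

lemma set_integral_lasso_weight_le_of_subset_l1_ball:
  assumes "0 \<le> lam" "0 < m"
    and B: "B \<subseteq> {b. (\<Sum>i<n. \<bar>b i\<bar>) \<le> d * real n * m}"
  shows "(LINT b:B | lebesgue_n n. lasso_weight n lam Y b)
    \<le> exp (d * real n) * (\<Prod>i<n. \<integral>x. lasso_factor lam (Y i) x * exp (- \<bar>x\<bar> / m) \<partial>lborel)"
proof -
  interpret product_sigma_finite "\<lambda>_::nat. lborel :: real measure"
    by (simp add: product_sigma_finite_def lborel.sigma_finite_measure_axioms)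
  define tilted where "tilted i x = lasso_factor lam (Y i) x * exp (- \<bar>x\<bar> / m)" for i x
  have int_tilted: "integrable lborel (tilted i)" for i
    unfolding tilted_def using assms(1,2)
    by (intro integrable_lasso_factor_mult) (auto simp: divide_nonpos_pos)
  have tilted_prod: "lasso_weight n lam Y b * exp (- (\<Sum>i<n. \<bar>b i\<bar>) / m) = (\<Prod>i<n. tilted i (b i))" for b
  proof -
    have "- (\<Sum>i<n. \<bar>b i\<bar>) / m = (\<Sum>i<n. - \<bar>b i\<bar> / m)"
      by (simp add: sum_divide_distrib sum_negf)
    then show ?thesis
      by (simp add: tilted_def lasso_weight_eq_prod prod.distrib exp_sum)
  qed
  have "(LINT b:B | lebesgue_n n. lasso_weight n lam Y b)
      \<le> (\<integral>b. exp (d * real n) * (\<Prod>i<n. tilted i (b i)) \<partial>lebesgue_n n)"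
    unfolding set_lebesgue_integral_def
  proof (rule integral_mono')
    show "integrable (lebesgue_n n) (\<lambda>b. exp (d * real n) * (\<Prod>i<n. tilted i (b i)))"
      by (intro integrable_mult_right product_integrable_prod int_tilted) auto
    fix b :: "nat \<Rightarrow> real"
    have pos: "0 < lasso_weight n lam Y b"
      by (simp add: lasso_weight_def)
    then show "0 \<le> exp (d * real n) * (\<Prod>i<n. tilted i (b i))"
      by (simp flip: tilted_prod)
    show "indicator B b *\<^sub>R lasso_weight n lam Y b \<le> exp (d * real n) * (\<Prod>i<n. tilted i (b i))"
    proof (cases "b \<in> B")
      case True
      then have "(\<Sum>i<n. \<bar>b i\<bar>) / m \<le> d * real n"
        using B assms(2) by (auto simp: divide_le_eq)
      then have "1 \<le> exp (d * real n) * exp (- (\<Sum>i<n. \<bar>b i\<bar>) / m)"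
        by (simp flip: exp_add)
      then have "lasso_weight n lam Y b
          \<le> lasso_weight n lam Y b * (exp (d * real n) * exp (- (\<Sum>i<n. \<bar>b i\<bar>) / m))"
        using pos by (simp add: mult_le_cancel_left1)
      then show ?thesis
        using True by (simp add: mult.left_commute flip: tilted_prod)
    qed (use pos in \<open>simp flip: tilted_prod\<close>)
  qed
  also have "\<dots> = exp (d * real n) * (\<Prod>i<n. \<integral>x. tilted i x \<partial>lborel)"
    by (subst integral_mult_right_zero, subst product_integral_prod) (use int_tilted in auto)
  finally show ?thesis
    unfolding tilted_def .
qed

lemma lasso_post_le_of_subset_l1_ball:
  assumes "0 \<le> lam" "0 < m" "m \<le> 1" "lam * m \<le> 1"
    and "B \<subseteq> {b. (\<Sum>i<n. \<bar>b i\<bar>) \<le> d * real n * m}"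
  shows "lasso_post n lam Y B \<le> (exp d * tilt_const) ^ n"
proof -
  define D where "D i = (\<integral>x. lasso_factor lam (Y i) x \<partial>lborel)" for i
  have "(LINT b:B | lebesgue_n n. lasso_weight n lam Y b)
      \<le> exp (d * real n) * (\<Prod>i<n. \<integral>x. lasso_factor lam (Y i) x * exp (- \<bar>x\<bar> / m) \<partial>lborel)"
    using assms(1,2,5) by (rule set_integral_lasso_weight_le_of_subset_l1_ball)
  also have "\<dots> \<le> exp (d * real n) * (\<Prod>i<n. tilt_const * D i)"
    unfolding D_def using assms(1-4)
    by (intro mult_left_mono prod_mono conjI integral_lasso_factor_tilt_le
        Bochner_Integration.integral_nonneg) (auto simp: less_imp_le lasso_factor_pos)
  also have "\<dots> = (exp d * tilt_const) ^ n * (\<Prod>i<n. D i)"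
    by (simp add: prod.distrib power_mult_distrib exp_of_nat_mult[symmetric] mult.commute)
  finally have "(LINT b:B | lebesgue_n n. lasso_weight n lam Y b) \<le> (exp d * tilt_const) ^ n * (\<Prod>i<n. D i)" .
  moreover have "0 < (\<Prod>i<n. D i)"
    unfolding D_def using assms(1) by (intro prod_pos integral_lasso_factor_pos)
  ultimately show ?thesis
    unfolding lasso_post_def integral_lasso_weight[OF assms(1)] D_def by (simp add: divide_le_eq)
qed

lemma l2_ball_subset_l1_ball:
  "{b. sqrt (\<Sum>i<n. (b i)^2) \<le> d * sqrt (real n) * m} \<subseteq> {b. (\<Sum>i<n. \<bar>b i\<bar>) \<le> d * real n * m}"
proof safe
  fix b :: "nat \<Rightarrow> real"
  assume "sqrt (\<Sum>i<n. (b i)^2) \<le> d * sqrt (real n) * m"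
  then have "sqrt (real n) * sqrt (\<Sum>i<n. (b i)^2) \<le> sqrt (real n) * (d * sqrt (real n) * m)"
    by (intro mult_left_mono) auto
  then show "(\<Sum>i<n. \<bar>b i\<bar>) \<le> d * real n * m"
    using sum_abs_le_sqrt_card_mult_sqrt_sum_squares[of b "{..<n}"] by (simp add: algebra_simps)
qed

lemma (in prob_space) norm_integral_le_const:
  fixes f :: "'a \<Rightarrow> 'b::{banach, second_countable_topology}"
  assumes "\<And>x. x \<in> space M \<Longrightarrow> norm (f x) \<le> c"
  shows "norm (\<integral>x. f x \<partial>M) \<le> c"
proof -
  have "norm (\<integral>x. f x \<partial>M) \<le> (\<integral>x. norm (f x) \<partial>M)"
    by (rule integral_norm_bound)
  also have "\<dots> \<le> (\<integral>x. c \<partial>M)"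
    using assms by (intro integral_mono') (auto intro: order_trans[OF norm_ge_zero])
  also have "\<dots> = c"
    by (simp add: prob_space)
  finally show ?thesis .
qed

lemma lasso_post_l2_ball_le:
  assumes "0 < lam"
  shows "lasso_post n lam Y {b. sqrt (\<Sum>i<n. (b i)^2) \<le> \<delta> * sqrt (real n) * min (1 / lam) 1}
    \<le> (exp \<delta> * tilt_const) ^ n"
proof -
  have "0 < min (1 / lam) 1" "lam * min (1 / lam) 1 \<le> 1"
    using assms by (auto simp: min_def field_simps)
  then show ?thesis
    using assms by (intro lasso_post_le_of_subset_l1_ball[where m = "min (1 / lam) 1"]
        l2_ball_subset_l1_ball) simp_all
qed

lemma exists_tilt_exponent: "\<exists>\<delta>>0. exp \<delta> * tilt_const < 1"
proof (intro exI conjI)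
  show "0 < - ln tilt_const / 2"
    using tilt_const_pos tilt_const_less_one by simp
  have "exp (- ln tilt_const / 2) * tilt_const < exp (- ln tilt_const) * tilt_const"
    using tilt_const_pos tilt_const_less_one by simp
  then show "exp (- ln tilt_const / 2) * tilt_const < 1"
    using tilt_const_pos by (simp add: exp_minus)
qed

theorem theorem7:
  fixes lam :: "nat \<Rightarrow> real"
  assumes "\<forall>n. lam n > 0"
    and "filterlim (\<lambda>n. sqrt (real n) / lam n) at_top sequentially"
  shows "\<exists>\<delta>>0. (\<lambda>n. LINT Y | std_gauss_n n.
            lasso_post n (lam n) Y
              {b. sqrt (\<Sum>i<n. (b i)^2) \<le> \<delta> * sqrt (real n) * min (1 / lam n) 1})
          \<longlonglongrightarrow> 0"
proof -
  obtain \<delta> :: real where "\<delta> > 0" and r: "exp \<delta> * tilt_const < 1"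
    using exists_tilt_exponent by blast
  have "norm (LINT Y | std_gauss_n n. lasso_post n (lam n) Y
          {b. sqrt (\<Sum>i<n. (b i)^2) \<le> \<delta> * sqrt (real n) * min (1 / lam n) 1})
        \<le> (exp \<delta> * tilt_const) ^ n" for n
  proof (rule prob_space.norm_integral_le_const)
    show "prob_space (std_gauss_n n)"
      by (intro prob_space_PiM prob_space_normal_density) auto
  qed (use assms(1) lasso_post_nonneg lasso_post_l2_ball_le in simp)
  then have "(\<lambda>n. LINT Y | std_gauss_n n. lasso_post n (lam n) Y
          {b. sqrt (\<Sum>i<n. (b i)^2) \<le> \<delta> * sqrt (real n) * min (1 / lam n) 1}) \<longlonglongrightarrow> 0"
    using r tilt_const_pos by (intro Lim_null_comparison[OF always_eventually LIMSEQ_power_zero]) auto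
  with \<open>\<delta> > 0\<close> show ?thesis
    by blast
qed

end
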